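(* Let $b_1,r_1,b_2,r_2$ be positive integers with $b_1r_2-b_2r_1=1$, and suppose $n=xr_1+yr_2$ for some integers $x,y$ with $r_2\ge x>0$ and $r_1\ge y>0$. Then $$\Delta^n(b_1+b_2,r_1+r_2)=\Delta^n(b_1,r_1)+\Delta^n(b_2,r_2)-\min\{x,y\}.$$
   Context: For positive integers $b,r$ and an integer $j\ge 1$, let $\overline{jb}$ denote the residue of $jb$ modulo $r$ in $\{0,\dots,r-1\}$, and define $$\overline{M}^j(b,r)=\frac{\overline{jb}\,(r-\overline{jb})}{2r},\qquad M^j(b,r)=\frac{jb\,(r-jb)}{2r},\qquad \Delta^j(b,r)=\overline{M}^j(b,r)-M^j(b,r).$$ *)

theory Defs
  imports Complex_Main
begin

definition Mbar :: "int \<Rightarrow> int \<Rightarrow> int \<Rightarrow> real" where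
  "Mbar j b r = (let c = (j * b) mod r in real_of_int (c * (r - c)) / (2 * real_of_int r))"

definition M :: "int \<Rightarrow> int \<Rightarrow> int \<Rightarrow> real" where
  "M j b r = real_of_int (j * b * (r - j * b)) / (2 * real_of_int r)"

definition Delta :: "int \<Rightarrow> int \<Rightarrow> int \<Rightarrow> real" where
  "Delta j b r = Mbar j b r - M j b r"

end

theory Submission
  imports Defs
begin

text \<open>
  If \<open>j b = q r + d\<close> with \<open>|d| \<le> r\<close>, then \<open>2 \<Delta>\<^sup>j(b,r) = q (q r + 2 d - r) - 2 min(d,0)\<close>.
  With \<open>Q = x b\<^sub>1 + y b\<^sub>2\<close>, the relation \<open>b\<^sub>1 r\<^sub>2 - b\<^sub>2 r\<^sub>1 = 1\<close> gives
  \<open>n b\<^sub>1 = Q r\<^sub>1 + y\<close>, \<open>n b\<^sub>2 = Q r\<^sub>2 - x\<close> and hence \<open>n (b\<^sub>1 + b\<^sub>2) = Q (r\<^sub>1 + r\<^sub>2) + (y - x)\<close>,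
  all with the same quotient \<open>Q\<close>. The quadratic parts are then additive, and the correction
  terms contribute \<open>max(x - y, 0) = x - min(x,y)\<close> on the left and \<open>x\<close> on the right.
\<close>

lemma Delta_eq_of_division:
  fixes j b r q c :: int
  assumes "r > 0" "j * b = q * r + c" "0 \<le> c" "c \<le> r"
  shows "Delta j b r = real_of_int (q * (q * r + 2 * c - r)) / 2"
proof -
  have "(j * b) mod r * (r - (j * b) mod r) - j * b * (r - j * b) = q * (q * r + 2 * c - r) * r"
  proof (cases "c = r")
    case True
    then show ?thesis using assms(2) by (simp add: algebra_simps)
  next
    case False
    then have "(j * b) mod r = c" using assms by (simp add: mod_pos_pos_trivial)
    then show ?thesis using assms(2) by (simp add: algebra_simps)
  qed
  then have "real_of_int ((j * b) mod r * (r - (j * b) mod r)) - real_of_int (j * b * (r - j * b))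
      = real_of_int (q * (q * r + 2 * c - r)) * real_of_int r"
    by (metis of_int_diff of_int_mult)
  then show ?thesis
    using assms(1) unfolding Delta_def Mbar_def M_def Let_def
    by (simp add: diff_divide_distrib[symmetric])
qed

text \<open>A negative remainder \<open>d\<close> is the remainder \<open>d + r\<close> of quotient \<open>q - 1\<close>.\<close>

lemma Delta_eq_of_near_division:
  fixes j b r q d :: int
  assumes "r > 0" "j * b = q * r + d" "\<bar>d\<bar> \<le> r"
  shows "Delta j b r = real_of_int (q * (q * r + 2 * d - r)) / 2 - real_of_int (min d 0)"
proof (cases "d \<ge> 0")
  case True
  then show ?thesis using Delta_eq_of_division[OF assms(1,2)] assms(3) by simp
next
  case False
  have "j * b = (q - 1) * r + (d + r)" using assms(2) by (simp add: algebra_simps)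
  then have "Delta j b r = real_of_int ((q - 1) * ((q - 1) * r + 2 * (d + r) - r)) / 2"
    using Delta_eq_of_division[OF assms(1)] assms(3) False by simp
  also have "(q - 1) * ((q - 1) * r + 2 * (d + r) - r) = q * (q * r + 2 * d - r) - 2 * d"
    by (simp add: algebra_simps)
  finally show ?thesis using False by simp
qed

theorem lemma2p3:
  fixes b1 r1 b2 r2 x y n :: int
  assumes "b1 > 0" "r1 > 0" "b2 > 0" "r2 > 0"
    and "b1 * r2 - b2 * r1 = 1"
    and "n = x * r1 + y * r2"
    and "0 < x" "x \<le> r2" "0 < y" "y \<le> r1"
  shows "Delta n (b1 + b2) (r1 + r2) = Delta n b1 r1 + Delta n b2 r2 - real_of_int (min x y)"
proof -
  define Q where "Q = x * b1 + y * b2"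
  have "n * b1 - (Q * r1 + y) = y * (b1 * r2 - b2 * r1 - 1)"
    unfolding assms(6) Q_def by (simp add: algebra_simps)
  then have div1: "n * b1 = Q * r1 + y" using assms(5) by simp
  have "n * b2 - (Q * r2 + (- x)) = - x * (b1 * r2 - b2 * r1 - 1)"
    unfolding assms(6) Q_def by (simp add: algebra_simps)
  then have div2: "n * b2 = Q * r2 + (- x)" using assms(5) by simp
  have div: "n * (b1 + b2) = Q * (r1 + r2) + (y - x)"
    using div1 div2 by (simp add: algebra_simps)
  define A where "A = Q * (Q * r1 + 2 * y - r1)"
  define B where "B = Q * (Q * r2 + 2 * (- x) - r2)"
  have "Delta n (b1 + b2) (r1 + r2) = real_of_int (A + B) / 2 - real_of_int (min (y - x) 0)"
  proof -
    have "Q * (Q * (r1 + r2) + 2 * (y - x) - (r1 + r2)) = A + B"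
      unfolding A_def B_def by (simp add: algebra_simps)
    then show ?thesis using Delta_eq_of_near_division[OF _ div] assms by simp
  qed
  moreover have "Delta n b1 r1 = real_of_int A / 2"
    using Delta_eq_of_near_division[OF assms(2) div1] assms unfolding A_def by simp
  moreover have "Delta n b2 r2 = real_of_int B / 2 + real_of_int x"
    using Delta_eq_of_near_division[OF assms(4) div2] assms unfolding B_def by simp
  ultimately show ?thesis
    by (simp add: min_def)
qed

end
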